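(* Let $\mathbf A$ be a regular BBL transformation of bandwidth $(p,q)$ and let $L\le R$ be finite integers with $R-L\ge\tau$. Then $\dim\mathcal M_{L,R}=d\tau$.
   Context: Fix $d\ge1$; $\mathbf M_d$ denotes complex $d\times d$ matrices. $\mathcal V^S_d$ is the vector space of all doubly infinite sequences $\Psi=\{\psi_j\}_{j\in\mathbb Z}$ with $\psi_j\in\mathbb C^d$. A matrix Laurent polynomial of bandwidth $(p,q)$ is $A(w,w^{-1})=\sum_{r=p}^q a_rw^r$ with integers $p\le q$, $a_r\in\mathbf M_d$, $a_p\neq0\neq a_q$. Its banded block-Laurent (BBL) transformation $\mathbf A$ acts on $\mathcal V^S_d$ by $(\mathbf A\Psi)_j=\sum_{r=p}^q a_r\psi_{j+r}$. $\mathbf A$ is regular if $\det\big(w^{-p}A(w,w^{-1})\big)$ is not the zero polynomial. Put $p'=\min(p,0)$, $q'=\max(0,q)$, $\tau=q'-p'$. For $-\infty\le L\le R\le\infty$, $\mathcal V_{L,R}$ is the subspace of sequences with $\psi_j=0$ whenever $j<L$ or $j>R$, and $\mathbf P_{L,R}$ is the projection onto $\mathcal V_{L,R}$ replacing $\psi_j$ by $0$ for $j\notin[L,R]$. The bulk solution space is $\mathcal M_{L,R}=\ker\big(\mathbf P_{L-p',R-q'}\mathbf A|_{\mathcal V_{L,R}}\big)$; for finite $L\le R$ this equals $\ker P_BA_N$, where $A_N=\mathbf P_{L,R}\mathbf A|_{\mathcal V_{L,R}}$ is the $dN\times dN$ block-Toeplitz matrix with blocks $a_{j-i}$, $N=R-L+1$,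 and $P_B=\mathbf P_{L-p',R-q'}|_{\mathcal V_{L,R}}$. *)

theory Defs
  imports "HOL-Analysis.Analysis" "HOL-Computational_Algebra.Polynomial" "HOL-Library.Function_Algebras"
begin

text \<open>Block size d is the cardinality of the finite index type 'd (so d >= 1).
  Coefficients a r :: complex^'d^'d, used for r in {p..q}.
  Sequences Psi :: int => complex^'d.\<close>

definition seq_scale :: "complex \<Rightarrow> (int \<Rightarrow> complex^'d) \<Rightarrow> (int \<Rightarrow> complex^'d)" where
  "seq_scale c \<Psi> = (\<lambda>j. c *s \<Psi> j)"

definition BBL :: "(int \<Rightarrow> complex^'d^'d) \<Rightarrow> int \<Rightarrow> int \<Rightarrow> (int \<Rightarrow> complex^'d) \<Rightarrow> (int \<Rightarrow> complex^'d)" where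
  "BBL a p q \<Psi> = (\<lambda>j. \<Sum>r\<in>{p..q}. a r *v \<Psi> (j + r))"

text \<open>Determinant of w^(-p) A(w, w^-1), a polynomial in w.\<close>
definition shifted_symbol_det :: "(int \<Rightarrow> complex^'d^'d) \<Rightarrow> int \<Rightarrow> int \<Rightarrow> complex poly" where
  "shifted_symbol_det a p q =
     det (\<chi> i j. \<Sum>r\<in>{p..q}. monom (a r $ i $ j) (nat (r - p)))"

definition regular_BBL :: "(int \<Rightarrow> complex^'d^'d) \<Rightarrow> int \<Rightarrow> int \<Rightarrow> bool" where
  "regular_BBL a p q \<longleftrightarrow> shifted_symbol_det a p q \<noteq> 0"

definition tau :: "int \<Rightarrow> int \<Rightarrow> int" where
  "tau p q = max 0 q - min p 0"

definition VLR :: "int \<Rightarrow> int \<Rightarrow> (int \<Rightarrow> complex^'d) set" where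
  "VLR L R = {\<Psi>. \<forall>j. (j < L \<or> j > R) \<longrightarrow> \<Psi> j = 0}"

definition PLR :: "int \<Rightarrow> int \<Rightarrow> (int \<Rightarrow> complex^'d) \<Rightarrow> (int \<Rightarrow> complex^'d)" where
  "PLR L R \<Psi> = (\<lambda>j. if L \<le> j \<and> j \<le> R then \<Psi> j else 0)"

definition bulk_space :: "(int \<Rightarrow> complex^'d^'d) \<Rightarrow> int \<Rightarrow> int \<Rightarrow> int \<Rightarrow> int \<Rightarrow> (int \<Rightarrow> complex^'d) set" where
  "bulk_space a p q L R =
     {\<Psi> \<in> VLR L R. PLR (L - min p 0) (R - max 0 q) (BBL a p q \<Psi>) = (\<lambda>_. 0)}"

end

theory Submission
  imports Defs
begin

text \<open>With \<open>L' = L - min p 0\<close> and \<open>R' = R - max 0 q\<close>, the truncated operator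
  \<open>\<Psi> \<mapsto> P_{L',R'} (A \<Psi>)\<close> maps \<open>V_{L,R}\<close> (dimension \<open>d (R - L + 1)\<close>) into \<open>V_{L',R'}\<close>
  (dimension \<open>d (R - L + 1 - \<tau>)\<close>), and its kernel is the bulk solution space; by rank-nullity
  it suffices to show that this map is onto. A linear functional with coefficients \<open>c_j\<close>
  vanishing on the image satisfies \<open>\<Sum>_j a_{k-j}^T c_j = 0\<close> for all \<open>k \<in> [L, R]\<close>. In
  generating-function form this says \<open>B(w)^T u(w) = 0\<close> for \<open>u(w) = \<Sum>_j c_j w^(j-L')\<close> and the
  symbol \<open>B(w) = \<Sum>_r a_r w^(r-p)\<close>. Regularity means that \<open>det B\<close> is a nonzero polynomial, so
  \<open>u(w) = 0\<close> at all but finitely many \<open>w\<close>, whence \<open>u = 0\<close> and the functional vanishes.\<close>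

lemma (in vector_space) span_Int_span_disjoint:
  assumes "independent (C \<union> D)" and "C \<inter> D = {}"
  shows "span C \<inter> span D = {0}"
proof -
  have "x = 0" if "x \<in> span C" "x \<in> span D" for x
  proof -
    have "representation (C \<union> D) x = representation C x"
         "representation (C \<union> D) x = representation D x"
      using representation_extend[OF assms(1) that(1)] representation_extend[OF assms(1) that(2)]
      by auto
    then have "representation (C \<union> D) x = (\<lambda>_. 0)"
      using representation_ne_zero[of C x] representation_ne_zero[of D x] assms(2)
      by (metis disjoint_iff ext)
    moreover have "x \<in> span (C \<union> D)"
      using that(1) span_mono[of C "C \<union> D"] by auto
    ultimately show "x = 0"
      using sum_nonzero_representation_eq[OF assms(1)] by force
  qed
  then show ?thesis by (auto simp: span_zero)
qed

lemma (in vector_space_pair) dim_kernel_add_dim_image: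
  assumes f: "Vector_Spaces.linear s1 s2 f" and V: "vs1.subspace V"
    and E: "finite E" "V \<subseteq> vs1.span E"
  shows "vs1.dim V = vs1.dim {x\<in>V. f x = 0} + vs2.dim (f ` V)"
proof -
  let ?K = "{x\<in>V. f x = 0}"
  obtain BK where BK: "BK \<subseteq> ?K" "vs1.independent BK" "?K \<subseteq> vs1.span BK" "card BK = vs1.dim ?K"
    by (rule vs1.basis_exists)
  obtain B where B: "BK \<subseteq> B" "B \<subseteq> V" "vs1.independent B" "V \<subseteq> vs1.span B"
    using vs1.maximal_independent_subset_extend[of BK V] BK by auto
  define C where "C = B - BK"
  have "finite B" using vs1.independent_span_bound[OF E(1) B(3)] B E by blast
  then have card_B: "card B = card BK + card C"
    using B(1) card_Diff_subset[OF finite_subset] card_mono by (fastforce simp: C_def)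
  have span_B: "vs1.span B = V"
    using B V vs1.span_minimal by blast
  have "vs1.span C \<inter> vs1.span BK = {0}"
    using vs1.span_Int_span_disjoint[of C BK] B(1,3) Diff_partition[OF B(1)]
    by (simp add: C_def Un_commute Int_commute)
  then have "x = 0" if "x \<in> vs1.span C" "f x = 0" for x
    using that BK(3) vs1.span_mono[of C B] span_B by (auto simp: C_def)
  then have inj: "inj_on f (vs1.span C)"
    using linear_inj_on_iff_eq_0[OF f vs1.subspace_span] by blast
  have "f ` V = vs2.span (f ` B)"
    using span_B linear_span_image[OF f] by metis
  also have "\<dots> = vs2.span (f ` C)"
  proof -
    have "f ` C \<subseteq> f ` B" "f ` B \<subseteq> insert 0 (f ` C)"
      using BK(1) by (auto simp: C_def)
    then show ?thesis
      using vs2.span_mono by (metis subset_antisym vs2.span_insert_0)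
  qed
  finally have "vs2.dim (f ` V) = card (f ` C)"
    using linear_independent_injective_image[OF f _ inj] vs1.independent_mono[OF B(3)]
      vs2.dim_span_eq_card_independent by (metis C_def Diff_subset vs2.dim_span)
  also have "\<dots> = card C"
    using card_image inj_on_subset[OF inj vs1.span_superset] by blast
  finally show ?thesis
    using vs1.basis_card_eq_dim[OF B(2,4,3)] BK(4) card_B by simp
qed

lemma (in vector_space) separating_functional:
  assumes "x \<notin> span S"
  obtains h where "Vector_Spaces.linear scale (*) h" "h x = 1" "\<And>y. y \<in> span S \<Longrightarrow> h y = 0"
proof -
  interpret functional: vector_space_pair scale "(*) :: 'a \<Rightarrow> 'a \<Rightarrow> 'a" ..
  obtain B where B: "B \<subseteq> S" "independent B" "S \<subseteq> span B"
    by (rule basis_exists)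
  have "x \<notin> span B"
    using assms span_mono[OF B(1)] by blast
  then have "independent (insert x B)"
    by (rule independent_insertI[OF _ B(2)])
  then obtain h where h: "Vector_Spaces.linear scale (*) h"
    and h_on: "\<forall>b\<in>insert x B. h b = (if b = x then 1 else 0)"
    using functional.linear_independent_extend[of "insert x B" "\<lambda>b. if b = x then 1 else 0"]
    by blast
  have "h y = 0" if "y \<in> span S" for y
  proof -
    have "y \<in> span B" using that B(3) span_minimal[OF _ subspace_span] by blast
    then show ?thesis
      using functional.linear_eq_0_on_span[OF h] h_on \<open>x \<notin> span B\<close> span_base by fastforce
  qed
  then show ?thesis using that h h_on by simp
qed

lemma poly_det:
  fixes M :: "'a::comm_ring_1 poly^'n^'n"
  shows "poly (det M) w = det (\<chi> i j. poly (M$i$j) w)"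
  by (simp add: det_def poly_sum poly_prod poly_of_int)

lemma poly_matrix_kernel_trivial:
  fixes M :: "'a::field_char_0 poly^'n^'n" and u :: "'a poly^'n"
  assumes "det M \<noteq> 0" and "\<And>w. (\<chi> i j. poly (M$i$j) w) *v (\<chi> i. poly (u$i) w) = 0"
  shows "u = 0"
proof (rule ccontr)
  assume "u \<noteq> 0"
  then obtain i0 where "u$i0 \<noteq> 0" by (auto simp: vec_eq_iff)
  then have "u$i0 * det M \<noteq> 0" using assms(1) by simp
  then obtain w where w: "poly (u$i0 * det M) w \<noteq> 0"
    using poly_roots_finite ex_new_if_finite[OF infinite_UNIV_char_0] by blast
  then have "det (\<chi> i j. poly (M$i$j) w) \<noteq> 0" by (simp add: poly_det)
  then have "(\<chi> i. poly (u$i) w) = 0"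
    using assms(2) matrix_left_invertible_ker invertible_det_nz unfolding invertible_def by blast
  then show False using w by (simp add: vec_eq_iff)
qed

lemma sum_shift_into:
  fixes G :: "int \<Rightarrow> 'a::comm_monoid_add"
  assumes "{p + j..q + j} \<subseteq> {L..R}"
  shows "(\<Sum>r\<in>{p..q}. G r) = (\<Sum>k\<in>{L..R}. if k - j \<in> {p..q} then G (k - j) else 0)"
proof -
  have "(\<Sum>k\<in>{L..R}. if k - j \<in> {p..q} then G (k - j) else 0) = (\<Sum>k\<in>{p + j..q + j}. G (k - j))"
    by (rule sum.mono_neutral_cong_right) (use assms in auto)
  also have "{p + j..q + j} = (+) j ` {p..q}"
    by (simp add: image_add_atLeastAtMost)
  also have "(\<Sum>k\<in>(+) j ` {p..q}. G (k - j)) = (\<Sum>r\<in>{p..q}. G r)"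
    by (subst sum.reindex) (auto simp: o_def)
  finally show ?thesis by simp
qed

lemma sum_fun_apply: "sum F S t = (\<Sum>x\<in>S. F x t)"
  by (induct S rule: infinite_finite_induct) auto

interpretation seq: vector_space "seq_scale :: complex \<Rightarrow> (int \<Rightarrow> complex^'d) \<Rightarrow> _"
  by unfold_locales
    (auto simp: seq_scale_def fun_eq_iff vector_add_ldistrib vector_sadd_rdistrib vector_smult_assoc)

interpretation seq_pair: vector_space_pair "seq_scale :: complex \<Rightarrow> (int \<Rightarrow> complex^'d) \<Rightarrow> _"
   "seq_scale :: complex \<Rightarrow> (int \<Rightarrow> complex^'d) \<Rightarrow> _" ..

interpretation seq_functional: vector_space_pair "seq_scale :: complex \<Rightarrow> (int \<Rightarrow> complex^'d) \<Rightarrow> _"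
   "(*) :: complex \<Rightarrow> complex \<Rightarrow> complex" ..

definition unit_seq :: "int \<Rightarrow> 'd \<Rightarrow> (int \<Rightarrow> complex^'d)" where
  "unit_seq j i = (\<lambda>t. if t = j then axis i 1 else 0)"

definition unit_seqs :: "int \<Rightarrow> int \<Rightarrow> (int \<Rightarrow> complex^'d) set" where
  "unit_seqs L R = (\<lambda>(j, i). unit_seq j i) ` ({L..R} \<times> UNIV)"

lemma VLR_unit_seq_expansion:
  assumes "\<Psi> \<in> VLR L R"
  shows "\<Psi> = (\<Sum>j\<in>{L..R}. \<Sum>i\<in>UNIV. seq_scale (\<Psi> j $ i) (unit_seq j i))"
proof
  fix t
  have "(\<Sum>j\<in>{L..R}. \<Sum>i\<in>UNIV. seq_scale (\<Psi> j $ i) (unit_seq j i)) t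
      = (\<Sum>j\<in>{L..R}. \<Sum>i\<in>UNIV. if t = j then \<Psi> j $ i *s axis i 1 else 0)"
    by (auto simp: sum_fun_apply seq_scale_def unit_seq_def intro!: sum.cong)
  also have "\<dots> = (\<Sum>j\<in>{L..R}. if t = j then (\<Sum>i\<in>UNIV. \<Psi> j $ i *s axis i 1) else 0)"
    by (rule sum.cong) auto
  also have "\<dots> = \<Psi> t"
    using assms by (auto simp: basis_expansion VLR_def)
  finally show "\<Psi> t = (\<Sum>j\<in>{L..R}. \<Sum>i\<in>UNIV. seq_scale (\<Psi> j $ i) (unit_seq j i)) t" ..
qed

lemma unit_seqs_subset_VLR: "unit_seqs L R \<subseteq> VLR L R"
  by (auto simp: unit_seqs_def VLR_def unit_seq_def)

lemma VLR_subset_span_unit_seqs: "VLR L R \<subseteq> seq.span (unit_seqs L R)"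
proof
  fix \<Psi> :: "int \<Rightarrow> complex^'d" assume "\<Psi> \<in> VLR L R"
  then show "\<Psi> \<in> seq.span (unit_seqs L R)"
    by (subst VLR_unit_seq_expansion, assumption, intro seq.span_sum seq.span_scale seq.span_base)
      (auto simp: unit_seqs_def)
qed

lemma finite_unit_seqs: "finite (unit_seqs L R)"
  by (simp add: unit_seqs_def)

lemma inj_unit_seq: "inj_on (\<lambda>(j, i). unit_seq j i :: int \<Rightarrow> complex^'d) X"
proof (rule inj_onI, clarify)
  fix j i j' i' assume eq: "unit_seq j i = (unit_seq j' i' :: int \<Rightarrow> complex^'d)"
  then have "unit_seq j i j $ i = unit_seq j' i' j $ i" by simp
  then have "j = j'" by (auto simp: unit_seq_def axis_def split: if_splits)
  moreover have "unit_seq j i j' = (unit_seq j' i' j' :: complex^'d)" using eq by simp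
  ultimately show "j = j' \<and> i = i'" by (simp add: unit_seq_def axis_eq_axis)
qed

lemma card_unit_seqs:
  "card (unit_seqs L R :: (int \<Rightarrow> complex^'d) set) = nat (R - L + 1) * CARD('d)"
  unfolding unit_seqs_def by (simp add: card_image[OF inj_unit_seq] card_cartesian_product)

lemma independent_unit_seqs: "seq.independent (unit_seqs L R :: (int \<Rightarrow> complex^'d) set)"
proof (rule seq.independent_if_scalars_zero[OF finite_unit_seqs])
  fix f :: "(int \<Rightarrow> complex^'d) \<Rightarrow> complex" and x :: "int \<Rightarrow> complex^'d"
  assume sum0: "(\<Sum>x\<in>unit_seqs L R. seq_scale (f x) x) = 0" and x: "x \<in> unit_seqs L R"
  from x obtain j0 i0 where j0: "j0 \<in> {L..R}" and x_eq: "x = unit_seq j0 i0"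
    by (auto simp: unit_seqs_def)
  have "0 = (\<Sum>(j, i)\<in>{L..R} \<times> UNIV. seq_scale (f (unit_seq j i)) (unit_seq j i)) j0 $ i0"
    using sum0 unfolding unit_seqs_def
    by (subst (asm) sum.reindex[OF inj_unit_seq]) (simp add: o_def case_prod_unfold)
  also have "\<dots> = (\<Sum>ji\<in>{L..R} \<times> UNIV. if ji = (j0, i0) then f x else 0)"
    unfolding sum_fun_apply sum_component
    by (rule sum.cong) (auto simp: seq_scale_def unit_seq_def axis_def x_eq split: if_splits)
  finally show "f x = 0" using j0 by simp
qed

lemma dim_VLR: "seq.dim (VLR L R :: (int \<Rightarrow> complex^'d) set) = nat (R - L + 1) * CARD('d)"
  using seq.basis_card_eq_dim[OF unit_seqs_subset_VLR VLR_subset_span_unit_seqs independent_unit_seqs]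
    card_unit_seqs by metis

lemma subspace_VLR: "seq.subspace (VLR L R)"
  by (auto simp: seq.subspace_def VLR_def seq_scale_def)

definition BBL_block :: "(int \<Rightarrow> 'm::zero) \<Rightarrow> int \<Rightarrow> int \<Rightarrow> int \<Rightarrow> int \<Rightarrow> 'm" where
  "BBL_block a p q j k = (if k - j \<in> {p..q} then a (k - j) else 0)"

lemma BBL_symbol_generating_function:
  fixes a :: "int \<Rightarrow> 'a::comm_ring_1^'d^'d" and c :: "int \<Rightarrow> 'd \<Rightarrow> 'a"
  assumes "L \<le> L' + p" and "R' + q \<le> R"
  shows "(\<Sum>i\<in>UNIV. (\<Sum>r\<in>{p..q}. a r $ i $ m * w ^ nat (r - p)) * (\<Sum>j\<in>{L'..R'}. c j i * w ^ nat (j - L')))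
       = (\<Sum>k\<in>{L..R}. w ^ nat (k - L' - p) * (\<Sum>j\<in>{L'..R'}. \<Sum>i\<in>UNIV. BBL_block a p q j k $ i $ m * c j i))"
proof -
  have shift: "(\<Sum>r\<in>{p..q}. a r $ i $ m * c j i * w ^ (nat (r - p) + nat (j - L')))
      = (\<Sum>k\<in>{L..R}. BBL_block a p q j k $ i $ m * c j i * w ^ nat (k - L' - p))"
    if j: "j \<in> {L'..R'}" for i j
  proof -
    have "{p + j..q + j} \<subseteq> {L..R}" using j assms by auto
    then have "(\<Sum>r\<in>{p..q}. a r $ i $ m * c j i * w ^ (nat (r - p) + nat (j - L')))
        = (\<Sum>k\<in>{L..R}. if k - j \<in> {p..q}
             then a (k - j) $ i $ m * c j i * w ^ (nat (k - j - p) + nat (j - L')) else 0)"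
      by (rule sum_shift_into)
    also have "\<dots> = (\<Sum>k\<in>{L..R}. BBL_block a p q j k $ i $ m * c j i * w ^ nat (k - L' - p))"
      using j
      by (intro sum.cong refl) (auto simp: BBL_block_def nat_add_distrib[symmetric] algebra_simps)
    finally show ?thesis .
  qed
  have "(\<Sum>i\<in>UNIV. (\<Sum>r\<in>{p..q}. a r $ i $ m * w ^ nat (r - p)) * (\<Sum>j\<in>{L'..R'}. c j i * w ^ nat (j - L')))
      = (\<Sum>i\<in>UNIV. \<Sum>j\<in>{L'..R'}. \<Sum>r\<in>{p..q}. a r $ i $ m * c j i * w ^ (nat (r - p) + nat (j - L')))"
    unfolding sum_distrib_left sum_distrib_right
    by (simp add: power_add mult_ac)
  also have "\<dots> = (\<Sum>i\<in>UNIV. \<Sum>j\<in>{L'..R'}. \<Sum>k\<in>{L..R}. BBL_block a p q j k $ i $ m * c j i * w ^ nat (k - L' - p))"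
    using shift by simp
  also have "\<dots> = (\<Sum>j\<in>{L'..R'}. \<Sum>k\<in>{L..R}. \<Sum>i\<in>UNIV. BBL_block a p q j k $ i $ m * c j i * w ^ nat (k - L' - p))"
    by (subst sum.swap) (intro sum.cong refl sum.swap)
  also have "\<dots> = (\<Sum>k\<in>{L..R}. w ^ nat (k - L' - p) * (\<Sum>j\<in>{L'..R'}. \<Sum>i\<in>UNIV. BBL_block a p q j k $ i $ m * c j i))"
    by (subst sum.swap) (simp add: sum_distrib_left mult_ac)
  finally show ?thesis .
qed

lemma BBL_transpose_kernel_trivial:
  fixes a :: "int \<Rightarrow> complex^'d^'d" and c :: "int \<Rightarrow> 'd \<Rightarrow> complex"
  assumes "regular_BBL a p q" and "L \<le> L' + p" and "R' + q \<le> R"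
    and "\<And>k m. k \<in> {L..R} \<Longrightarrow> (\<Sum>j\<in>{L'..R'}. \<Sum>i\<in>UNIV. BBL_block a p q j k $ i $ m * c j i) = 0"
    and "j \<in> {L'..R'}"
  shows "c j i = 0"
proof -
  define S :: "complex poly^'d^'d"
    where "S = (\<chi> i m. \<Sum>r\<in>{p..q}. monom (a r $ i $ m) (nat (r - p)))"
  define U :: "complex poly^'d" where "U = (\<chi> i. \<Sum>j\<in>{L'..R'}. monom (c j i) (nat (j - L')))"
  have "det (transpose S) \<noteq> 0"
    using assms(1) by (simp add: det_transpose regular_BBL_def shifted_symbol_det_def S_def)
  moreover have "(\<chi> i j. poly (transpose S $ i $ j) w) *v (\<chi> i. poly (U $ i) w) = 0" for w
    using BBL_symbol_generating_function[OF assms(2,3), where a=a and c=c and w=w] assms(4)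
    by (simp add: vec_eq_iff matrix_vector_mult_def transpose_def S_def U_def poly_sum poly_monom
        mult.commute)
  ultimately have "U = 0"
    by (rule poly_matrix_kernel_trivial)
  then have "coeff (U $ i) (nat (j - L')) = 0" by simp
  moreover have "coeff (U $ i) (nat (j - L')) = c j i"
    using assms(5)
    by (simp add: U_def coeff_sum coeff_monom nat_eq_iff2 if_distrib sum.delta cong: if_cong)
  ultimately show ?thesis by simp
qed

lemma linear_PLR_BBL:
  "Vector_Spaces.linear seq_scale seq_scale (\<lambda>\<Psi> :: int \<Rightarrow> complex^'d. PLR L R (BBL a p q \<Psi>))"
  unfolding Vector_Spaces.linear_iff
proof (intro conjI allI seq.vector_space_axioms)
  show "PLR L R (BBL a p q (x + y)) = PLR L R (BBL a p q x) + PLR L R (BBL a p q y)"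
    for x y :: "int \<Rightarrow> complex^'d"
    by (auto simp: fun_eq_iff PLR_def BBL_def matrix_vector_right_distrib sum.distrib)
  show "PLR L R (BBL a p q (seq_scale c x)) = seq_scale c (PLR L R (BBL a p q x))" for c x
    by (auto simp: fun_eq_iff PLR_def BBL_def seq_scale_def vec_eq_iff matrix_vector_mult_def
        sum_component sum_distrib_left mult_ac)
qed

lemma PLR_BBL_unit_seq:
  assumes "j \<in> {L..R}"
  shows "PLR L R (BBL a p q (unit_seq k m)) j = BBL_block a p q j k *v axis m 1"
proof -
  have "PLR L R (BBL a p q (unit_seq k m)) j = (\<Sum>r\<in>{p..q}. a r *v unit_seq k m (j + r))"
    using assms by (simp add: PLR_def BBL_def)
  also have "\<dots> = (\<Sum>r\<in>{p..q}. if r = k - j then a r *v axis m 1 else 0)"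
    by (rule sum.cong) (auto simp: unit_seq_def)
  finally show ?thesis by (simp add: BBL_block_def)
qed

lemma linear_functional_on_VLR:
  assumes "Vector_Spaces.linear seq_scale (*) h" and "\<Psi> \<in> VLR L R"
  shows "h \<Psi> = (\<Sum>j\<in>{L..R}. \<Sum>i\<in>UNIV. \<Psi> j $ i * h (unit_seq j i))"
  by (subst VLR_unit_seq_expansion[OF assms(2)])
    (simp add: seq_functional.linear_sum[OF assms(1)] seq_functional.linear_scale[OF assms(1)])

lemma VLR_subset_span_PLR_BBL:
  fixes a :: "int \<Rightarrow> complex^'d^'d"
  assumes reg: "regular_BBL a p q" and "L \<le> L' + p" and "R' + q \<le> R"
  shows "VLR L' R' \<subseteq> seq.span ((\<lambda>\<Psi>. PLR L' R' (BBL a p q \<Psi>)) ` VLR L R)"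
proof (rule ccontr)
  let ?f = "\<lambda>\<Psi>. PLR L' R' (BBL a p q \<Psi>)"
  assume "\<not> ?thesis"
  then obtain \<Phi> where \<Phi>: "\<Phi> \<in> VLR L' R'" "\<Phi> \<notin> seq.span (?f ` VLR L R)" by auto
  obtain h where h: "Vector_Spaces.linear seq_scale (*) h" "h \<Phi> = 1"
    and h_image: "\<And>\<Psi>. \<Psi> \<in> seq.span (?f ` VLR L R) \<Longrightarrow> h \<Psi> = 0"
    using seq.separating_functional[OF \<Phi>(2)] by blast
  have "(\<Sum>j\<in>{L'..R'}. \<Sum>i\<in>UNIV. BBL_block a p q j k $ i $ m * h (unit_seq j i)) = 0"
    if k: "k \<in> {L..R}" for k m
  proof -
    have "unit_seq k m \<in> VLR L R" using k by (auto simp: unit_seq_def VLR_def)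
    then have "h (?f (unit_seq k m)) = 0" by (intro h_image seq.span_base) auto
    moreover have "?f (unit_seq k m) \<in> VLR L' R'" by (auto simp: VLR_def PLR_def)
    ultimately show ?thesis
      by (simp add: linear_functional_on_VLR[OF h(1)] PLR_BBL_unit_seq matrix_vector_mult_def axis_def
          if_distrib cong: if_cong)
  qed
  from BBL_transpose_kernel_trivial[where c = "\<lambda>j i. h (unit_seq j i)", OF reg assms(2,3) this]
  have "h (unit_seq j i) = 0" if "j \<in> {L'..R'}" for j i
    using that by blast
  then have "h \<Phi> = 0" by (simp add: linear_functional_on_VLR[OF h(1) \<Phi>(1)])
  then show False using h(2) by simp
qed

theorem mainTheorem3:
  fixes a :: "int \<Rightarrow> complex^'d^'d" and p q L R :: int
  assumes "p \<le> q" and "a p \<noteq> 0" and "a q \<noteq> 0"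
    and "regular_BBL a p q"
    and "L \<le> R" and "R - L \<ge> tau p q"
  shows "vector_space.dim seq_scale (bulk_space a p q L R) = CARD('d) * nat (tau p q)"
proof -
  let ?L' = "L - min p 0" and ?R' = "R - max 0 q"
  let ?f = "\<lambda>\<Psi>. PLR ?L' ?R' (BBL a p q \<Psi>)"
  let ?V = "VLR L R :: (int \<Rightarrow> complex^'d) set"
  have "seq.dim ?V = seq.dim (bulk_space a p q L R) + seq.dim (?f ` ?V)"
    using seq_pair.dim_kernel_add_dim_image[OF linear_PLR_BBL subspace_VLR finite_unit_seqs
        VLR_subset_span_unit_seqs]
    by (simp add: bulk_space_def zero_fun_def)
  moreover have "seq.dim (?f ` ?V) = seq.dim (VLR ?L' ?R' :: (int \<Rightarrow> complex^'d) set)"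
    by (intro seq.span_eq_dim iffD2[OF seq.span_eq] conjI VLR_subset_span_PLR_BBL[OF assms(4)])
      (auto simp: VLR_def PLR_def intro: seq.span_base)
  \<comment> \<open>\<open>R - L \<ge> \<tau>\<close> keeps \<open>?R' - ?L' + 1\<close> nonnegative.\<close>
  moreover have "nat (R - L + 1) = nat (?R' - ?L' + 1) + nat (tau p q)"
    using assms(6) by (simp add: tau_def)
  ultimately show ?thesis
    by (simp add: dim_VLR add_mult_distrib2 mult.commute)
qed

end
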